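(* Let $(\alpha,\beta)\in\mathbb{R}^2\setminus\{(0,0)\}$ and let $\overline y$ be the solution of $\ddot y+3y+\frac32y^3=0$, $y(0)=\alpha$, $\dot y(0)=\beta$, with energy $E_1=\frac{\beta^2}{2}+\frac32\alpha^2+\frac38\alpha^4$. Then $\overline y$ is torsionally stable, i.e. the trivial solution of the Hill equation $\ddot\xi+\big(7+\frac{27}{2}\overline y(t)^2\big)\xi=0$ is stable in the Lyapunov sense, provided that $\|\overline y\|_\infty\le\sqrt{10/21}$ or, equivalently, provided that $E_1\le\frac{235}{294}$.
   Context: $\overline y$ is the first vertical mode of the one-mode system $\ddot y_1+3y_1+\frac32y_1^3+\frac92y_1z_1^2=0$, $\ddot z_1+7z_1+\frac92z_1^3+\frac{27}{2}z_1y_1^2=0$ (the solution with $z_1\equiv0$), and the Hill equation is the linearization of the $z_1$-equation around $(\overline y,0)$. Stability of the trivial solution means that solutions with small $|\xi(0)|,|\dot\xi(0)|$ remain small for all $t\ge0$. *)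

theory Defs
  imports "HOL-Analysis.Analysis"
begin

definition hill_solution :: "(real \<Rightarrow> real) \<Rightarrow> (real \<Rightarrow> real) \<Rightarrow> (real \<Rightarrow> real) \<Rightarrow> bool" where
  "hill_solution q \<xi> \<xi>' \<longleftrightarrow>
     (\<forall>t. (\<xi> has_real_derivative \<xi>' t) (at t) \<and> (\<xi>' has_real_derivative (- q t * \<xi> t)) (at t))"

definition hill_lyapunov_stable :: "(real \<Rightarrow> real) \<Rightarrow> bool" where
  "hill_lyapunov_stable q \<longleftrightarrow>
     (\<forall>\<epsilon>>0. \<exists>\<delta>>0. \<forall>\<xi> \<xi>'. hill_solution q \<xi> \<xi>' \<and> \<bar>\<xi> 0\<bar> < \<delta> \<and> \<bar>\<xi>' 0\<bar> < \<delta> \<longrightarrow>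
        (\<forall>t\<ge>0. \<bar>\<xi> t\<bar> < \<epsilon> \<and> \<bar>\<xi>' t\<bar> < \<epsilon>))"

end

theory Submission
  imports Defs
begin

text \<open>The first vertical mode \<open>y\<close> oscillates with an amplitude \<open>A\<close> fixed by the energy,
  \<open>E = V(A)\<close> with \<open>V(x) = 3/2 x\<^sup>2 + 3/8 x\<^sup>4\<close>; since \<open>V\<close> increases with \<open>x\<^sup>2\<close>, the amplitude
  condition \<open>A \<le> sqrt (10/21)\<close> is the energy condition \<open>E \<le> V (sqrt (10/21)) = 235/294\<close>.
  By its reflection symmetries \<open>y\<close> is antiperiodic with some half period \<open>T\<close>, and timing a quarter
  oscillation through \<open>arccos (y/A)\<close> gives \<open>(\<pi>/T)\<^sup>2 = 3 + 3/4 (A\<^sup>2 + p\<^sup>2)\<close> for some \<open>0 < p < A\<close>.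
  Hence the \<open>T\<close>-periodic Hill coefficient \<open>q = 7 + 27/2 y\<^sup>2\<close> satisfies
  \<open>(\<pi>/T)\<^sup>2 < 7 \<le> q \<le> 7 + 27/2 A\<^sup>2 < (2\<pi>/T)\<^sup>2\<close> when \<open>A\<^sup>2 \<le> 10/21\<close>, and Zhukovskii's criterion
  applies: by Sturm comparison every interval of length \<open>\<pi>/\<surd>7 < T\<close> contains a zero of a solution,
  while distinct zeros are more than \<open>T/2\<close> apart, so no solution satisfies \<open>\<xi>(t + T) = \<lambda> \<xi>(t)\<close>.
  Consequently the conserved Wronskian of a solution and its translate is a definite quadratic form
  in \<open>(\<xi>(nT), \<xi>'(nT))\<close>, which bounds all solutions.\<close>

text \<open>A Gronwall-type argument: \<open>e\<close> times \<open>exp (-L t)\<close> cannot increase and \<open>e\<close> times \<open>exp (L t)\<close>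
  cannot decrease, so a zero of \<open>e\<close> propagates in both directions.\<close>
lemma nonneg_eq_0_if_abs_deriv_le:
  fixes e e' :: "real \<Rightarrow> real"
  assumes der: "\<And>x. (e has_real_derivative e' x) (at x)"
    and bound: "\<And>x. \<bar>e' x\<bar> \<le> L * e x" and nonneg: "\<And>x. 0 \<le> e x" and zero: "e s = 0"
  shows "e t = 0"
proof -
  have exp_der: "((\<lambda>x. exp (c * x)) has_real_derivative exp (c * x) * c) (at x)" for c x
    by (auto intro!: derivative_eq_intros)
  have weighted_der: "((\<lambda>x. e x * exp (c * x)) has_real_derivative (e' x + c * e x) * exp (c * x)) (at x)"
    for c x
    by (rule DERIV_cong[OF DERIV_mult'[OF der exp_der]]) (simp add: algebra_simps)
  have "e t * exp (- L * t) \<le> e s * exp (- L * s)" if "s \<le> t"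
  proof (rule DERIV_nonpos_imp_nonincreasing[OF that])
    fix x
    have "(e' x + - L * e x) * exp (- L * x) \<le> 0"
      using bound[of x] by (intro mult_nonpos_nonneg) auto
    then show "\<exists>y. ((\<lambda>x. e x * exp (- L * x)) has_real_derivative y) (at x) \<and> y \<le> 0"
      using weighted_der by blast
  qed
  moreover have "e t * exp (L * t) \<le> e s * exp (L * s)" if "t \<le> s"
  proof (rule DERIV_nonneg_imp_nondecreasing[OF that])
    fix x
    have "0 \<le> (e' x + L * e x) * exp (L * x)"
      using bound[of x] by (intro mult_nonneg_nonneg) auto
    then show "\<exists>y. ((\<lambda>x. e x * exp (L * x)) has_real_derivative y) (at x) \<and> 0 \<le> y"
      using weighted_der by blast
  qed
  ultimately have "e t * exp (- L * t) \<le> 0 \<or> e t * exp (L * t) \<le> 0"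
    using zero by fastforce
  then show ?thesis using nonneg[of t] by (auto simp: mult_le_0_iff)
qed

lemma connected_pos_if_nonzero:
  fixes f :: "real \<Rightarrow> real"
  assumes "connected S" "continuous_on S f" "\<forall>t\<in>S. f t \<noteq> 0" "a \<in> S" "f a > 0" "t \<in> S"
  shows "f t > 0"
proof (rule ccontr)
  assume "\<not> f t > 0"
  then have "f t \<le> 0" "0 \<le> f a" using assms(5) by simp_all
  moreover have "connected (f ` S)" using assms(2,1) by (rule connected_continuous_image)
  moreover have "f t \<in> f ` S" "f a \<in> f ` S" using assms(4,6) by simp_all
  ultimately have "0 \<in> f ` S" unfolding connected_iff_interval by blast
  then show False using assms(3) by auto
qed

lemma first_zero_after:
  fixes f :: "real \<Rightarrow> real"
  assumes cont: "continuous_on {a..b} f" and "a \<le> b" "f a > 0" "f b \<le> 0"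
  obtains d where "a < d" "d \<le> b" "f d = 0" "\<forall>t\<in>{a..<d}. f t > 0"
proof -
  define Z where "Z = {a..b} \<inter> f -` {0}"
  obtain z where "a \<le> z" "z \<le> b" "f z = 0"
    using IVT2'[of f b 0 a] assms by auto
  then have "z \<in> Z" by (simp add: Z_def)
  have "closed Z"
    unfolding Z_def using cont by (intro continuous_closed_preimage) auto
  moreover have bdd: "bdd_below Z" unfolding Z_def by (rule bdd_belowI[of _ a]) auto
  ultimately have "Inf Z \<in> Z" using \<open>z \<in> Z\<close> closed_contains_Inf by blast
  moreover have pos: "f t > 0" if t: "t \<in> {a..<Inf Z}" for t
  proof (rule ccontr)
    assume "\<not> f t > 0"
    moreover have "t \<le> b" using t \<open>Inf Z \<in> Z\<close> by (auto simp: Z_def)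
    ultimately obtain z where "a \<le> z" "z \<le> t" "f z = 0"
      using IVT2'[of f t 0 a] t assms(3) continuous_on_subset[OF cont, of "{a..t}"] by auto
    then have "z \<in> Z" using \<open>t \<le> b\<close> by (auto simp: Z_def)
    then show False using cInf_lower[OF _ bdd] \<open>z \<le> t\<close> t by fastforce
  qed
  moreover have "a \<noteq> Inf Z" using \<open>Inf Z \<in> Z\<close> assms(3) by (auto simp: Z_def)
  ultimately show ?thesis using that[of "Inf Z"] by (auto simp: Z_def)
qed

lemma DERIV_le_imp_le_affine:
  fixes f f' :: "real \<Rightarrow> real"
  assumes "a \<le> b" and "\<And>x. a \<le> x \<Longrightarrow> x \<le> b \<Longrightarrow> (f has_real_derivative f' x) (at x)"
    and "\<And>x. a \<le> x \<Longrightarrow> x \<le> b \<Longrightarrow> f' x \<le> c"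
  shows "f b \<le> f a + c * (b - a)"
proof -
  have "(\<lambda>x. f x - c * x) b \<le> (\<lambda>x. f x - c * x) a"
  proof (rule DERIV_nonpos_imp_nonincreasing[OF assms(1)])
    fix x assume "a \<le> x" "x \<le> b"
    then show "\<exists>y. ((\<lambda>x. f x - c * x) has_real_derivative y) (at x) \<and> y \<le> 0"
      using assms(2,3) by (intro exI[of _ "f' x - c * 1"]) (auto intro!: derivative_intros)
  qed
  then show ?thesis by (simp add: algebra_simps)
qed

lemma DERIV_ge_imp_ge_affine:
  fixes f f' :: "real \<Rightarrow> real"
  assumes "a \<le> b" and "\<And>x. a \<le> x \<Longrightarrow> x \<le> b \<Longrightarrow> (f has_real_derivative f' x) (at x)"
    and "\<And>x. a \<le> x \<Longrightarrow> x \<le> b \<Longrightarrow> c \<le> f' x"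
  shows "f a + c * (b - a) \<le> f b"
  using DERIV_le_imp_le_affine[of a b "\<lambda>x. - f x" "\<lambda>x. - f' x" "- c"] assms
  by (simp add: DERIV_minus)

lemma abs_lincomb_le:
  fixes a b x y :: real
  assumes "\<bar>a\<bar> \<le> r" "\<bar>b\<bar> \<le> r" "\<bar>x\<bar> + \<bar>y\<bar> \<le> M"
  shows "\<bar>a * x + b * y\<bar> \<le> r * M"
proof -
  have "\<bar>a * x + b * y\<bar> \<le> \<bar>a\<bar> * \<bar>x\<bar> + \<bar>b\<bar> * \<bar>y\<bar>"
    by (metis abs_mult abs_triangle_ineq)
  also have "\<dots> \<le> r * \<bar>x\<bar> + r * \<bar>y\<bar>"
    using assms by (intro add_mono mult_right_mono) auto
  also have "\<dots> \<le> r * M"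
    using assms by (simp add: distrib_left[symmetric] mult_left_mono)
  finally show ?thesis .
qed

lemma quadratic_form_coercive:
  fixes A B C :: real
  assumes nz: "\<And>a b. (a, b) \<noteq> (0, 0) \<Longrightarrow> A * a^2 + B * a * b + C * b^2 \<noteq> 0"
  obtains m where "m > 0" "\<And>a b. m * (a^2 + b^2) \<le> \<bar>A * a^2 + B * a * b + C * b^2\<bar>"
proof -
  have A: "A \<noteq> 0" using nz[of 1 0] by simp
  define D where "D = 4 * A * C - B^2"
  have D: "D > 0"
  proof (rule ccontr)
    assume "\<not> D > 0"
    define s where "s = sqrt (B^2 - 4 * A * C)"
    have "s^2 = B^2 - 4 * A * C" using \<open>\<not> D > 0\<close> by (simp add: s_def D_def)
    moreover have "A * ((s - B) / (2 * A))^2 + B * ((s - B) / (2 * A)) * 1 + C * 1^2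
        = (s^2 - B^2 + 4 * A * C) / (4 * A)"
      using A by (simp add: field_simps power2_eq_square)
    ultimately have "A * ((s - B) / (2 * A))^2 + B * ((s - B) / (2 * A)) * 1 + C * 1^2 = 0" by simp
    then show False using nz[of "(s - B) / (2 * A)" 1] by simp
  qed
  define m where "m = D / (4 * (\<bar>A\<bar> + \<bar>C\<bar>))"
  have "m * (a^2 + b^2) \<le> \<bar>A * a^2 + B * a * b + C * b^2\<bar>" for a b
  proof -
    let ?P = "A * a^2 + B * a * b + C * b^2"
    have e1: "4 * A * ?P = (2 * A * a + B * b)^2 + D * b^2"
      and e2: "4 * C * ?P = (2 * C * b + B * a)^2 + D * a^2"
      by (simp_all add: D_def algebra_simps power2_eq_square)
    have "D * b^2 \<le> \<bar>4 * A * ?P\<bar>" "D * a^2 \<le> \<bar>4 * C * ?P\<bar>"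
      unfolding e1 e2 using D by simp_all
    then have "D * b^2 \<le> 4 * \<bar>A\<bar> * \<bar>?P\<bar>" "D * a^2 \<le> 4 * \<bar>C\<bar> * \<bar>?P\<bar>"
      by (simp_all only: abs_mult abs_numeral)
    then have "D * (a^2 + b^2) \<le> (4 * (\<bar>A\<bar> + \<bar>C\<bar>)) * \<bar>?P\<bar>"
      by (simp add: algebra_simps)
    moreover have "4 * (\<bar>A\<bar> + \<bar>C\<bar>) > 0" using A by simp
    ultimately show ?thesis unfolding m_def by (simp add: field_simps)
  qed
  moreover have "m > 0" using D A by (simp add: m_def)
  ultimately show ?thesis using that by blast
qed

lemma periodic_add_mult:
  assumes "\<forall>t. f (t + T) = f t"
  shows "f (t + real n * T) = f t"
proof (induction n arbitrary: t)
  case (Suc n)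
  have "f (t + real (Suc n) * T) = f ((t + real n * T) + T)" by (simp add: algebra_simps)
  then show ?case using assms Suc by simp
qed simp

section \<open>Hill equations\<close>

lemma hill_solutionD:
  assumes "hill_solution q \<xi> \<xi>'"
  shows "(\<xi> has_real_derivative \<xi>' t) (at t)" "(\<xi>' has_real_derivative (- q t * \<xi> t)) (at t)"
  using assms unfolding hill_solution_def by blast+

lemma hill_solution_continuous_on:
  assumes "hill_solution q \<xi> \<xi>'"
  shows "continuous_on S \<xi>" "continuous_on S \<xi>'"
  using hill_solutionD[OF assms] by (meson DERIV_isCont continuous_at_imp_continuous_on)+

lemma hill_solution_lincomb:
  assumes "hill_solution q \<xi> \<xi>'" "hill_solution q \<eta> \<eta>'"
  shows "hill_solution q (\<lambda>t. c * \<xi> t + d * \<eta> t) (\<lambda>t. c * \<xi>' t + d * \<eta>' t)"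
  unfolding hill_solution_def
proof
  fix t
  note D = hill_solutionD[OF assms(1), of t] hill_solutionD[OF assms(2), of t]
  have "((\<lambda>t. c * \<xi>' t + d * \<eta>' t) has_real_derivative c * (- q t * \<xi> t) + d * (- q t * \<eta> t)) (at t)"
    by (intro DERIV_add DERIV_cmult D)
  moreover have "c * (- q t * \<xi> t) + d * (- q t * \<eta> t) = - q t * (c * \<xi> t + d * \<eta> t)"
    by (simp add: algebra_simps)
  ultimately show "((\<lambda>t. c * \<xi> t + d * \<eta> t) has_real_derivative c * \<xi>' t + d * \<eta>' t) (at t) \<and>
      ((\<lambda>t. c * \<xi>' t + d * \<eta>' t) has_real_derivative - q t * (c * \<xi> t + d * \<eta> t)) (at t)"
    by (simp add: DERIV_add DERIV_cmult D)
qed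

lemma hill_solution_uminus:
  assumes "hill_solution q \<xi> \<xi>'"
  shows "hill_solution q (\<lambda>t. - \<xi> t) (\<lambda>t. - \<xi>' t)"
  using hill_solution_lincomb[OF assms assms, of "-1" 0] by simp

lemma hill_solution_shift:
  assumes "hill_solution q \<xi> \<xi>'" and "\<forall>t. q (t + T) = q t"
  shows "hill_solution q (\<lambda>t. \<xi> (t + T)) (\<lambda>t. \<xi>' (t + T))"
  unfolding hill_solution_def
proof
  fix t
  show "((\<lambda>t. \<xi> (t + T)) has_real_derivative \<xi>' (t + T)) (at t) \<and>
      ((\<lambda>t. \<xi>' (t + T)) has_real_derivative - q t * \<xi> (t + T)) (at t)"
    using hill_solutionD[OF assms(1), of "t + T"] assms(2)
    by (simp add: DERIV_shift[symmetric])
qed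

lemma hill_wronskian_const:
  assumes "hill_solution q \<xi> \<xi>'" "hill_solution q \<eta> \<eta>'"
  shows "\<xi> t * \<eta>' t - \<xi>' t * \<eta> t = \<xi> s * \<eta>' s - \<xi>' s * \<eta> s"
proof (rule DERIV_isconst_all[where f = "\<lambda>t. \<xi> t * \<eta>' t - \<xi>' t * \<eta> t"], intro allI)
  fix x
  note D = hill_solutionD[OF assms(1), of x] hill_solutionD[OF assms(2), of x]
  have "((\<lambda>t. \<xi> t * \<eta>' t - \<xi>' t * \<eta> t) has_real_derivative
      (\<xi> x * (- q x * \<eta> x) + \<xi>' x * \<eta>' x) - (\<xi>' x * \<eta>' x + (- q x * \<xi> x) * \<eta> x)) (at x)"
    by (intro DERIV_diff DERIV_mult' D)
  then show "((\<lambda>t. \<xi> t * \<eta>' t - \<xi>' t * \<eta> t) has_real_derivative 0) (at x)"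
    by (simp add: algebra_simps)
qed

lemma hill_solution_eq_0:
  assumes hs: "hill_solution q \<xi> \<xi>'" and K: "\<forall>t. \<bar>q t\<bar> \<le> K"
    and "\<xi> s = 0" "\<xi>' s = 0"
  shows "\<xi> t = 0 \<and> \<xi>' t = 0"
proof -
  let ?e = "\<lambda>t. (\<xi> t)^2 + (\<xi>' t)^2"
  have "?e t = 0"
  proof (rule nonneg_eq_0_if_abs_deriv_le[where e = ?e])
    fix x
    note D = hill_solutionD[OF hs, of x]
    show "(?e has_real_derivative (1 - q x) * (2 * (\<xi> x * \<xi>' x))) (at x)"
      unfolding power2_eq_square
      by (rule DERIV_cong[OF DERIV_add[OF DERIV_mult'[OF D(1) D(1)] DERIV_mult'[OF D(2) D(2)]]])
        (simp add: algebra_simps)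
    have "\<bar>1 - q x\<bar> \<le> 1 + \<bar>K\<bar>" "\<bar>2 * (\<xi> x * \<xi>' x)\<bar> \<le> ?e x"
      using K[rule_format, of x] sum_squares_bound[of "\<bar>\<xi> x\<bar>" "\<bar>\<xi>' x\<bar>"] by (auto simp: abs_mult)
    then have "\<bar>1 - q x\<bar> * \<bar>2 * (\<xi> x * \<xi>' x)\<bar> \<le> (1 + \<bar>K\<bar>) * ?e x"
      by (intro mult_mono) auto
    then show "\<bar>(1 - q x) * (2 * (\<xi> x * \<xi>' x))\<bar> \<le> (1 + \<bar>K\<bar>) * ?e x"
      by (simp only: abs_mult[of "1 - q x"])
  qed (use assms in auto)
  then show ?thesis by (simp add: add_nonneg_eq_0_iff)
qed

text \<open>The Wronskian of \<open>\<xi>\<close> with \<open>sin (w (t - c))\<close>, a solution of \<open>x'' + w\<^sup>2 x = 0\<close>; the sign of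
  its derivative drives the Sturm comparison arguments below.\<close>
lemma hill_sturm_deriv:
  assumes "hill_solution q \<xi> \<xi>'"
  shows "((\<lambda>t. \<xi>' t * sin (w * (t - c)) - \<xi> t * (w * cos (w * (t - c))))
     has_real_derivative (w^2 - q t) * \<xi> t * sin (w * (t - c))) (at t)"
proof -
  have sin: "((\<lambda>t. sin (w * (t - c))) has_real_derivative cos (w * (t - c)) * w) (at t)"
    and cos: "((\<lambda>t. w * cos (w * (t - c))) has_real_derivative w * (- sin (w * (t - c)) * w)) (at t)"
    by (auto intro!: derivative_eq_intros)
  show ?thesis
    by (rule DERIV_cong[OF DERIV_diff[OF DERIV_mult'[OF hill_solutionD(2)[OF assms] sin]
          DERIV_mult'[OF hill_solutionD(1)[OF assms] cos]]])
      (simp add: algebra_simps power2_eq_square)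
qed

lemma hill_sturm_zero_in_interval:
  assumes hs: "hill_solution q \<xi> \<xi>'" and w: "w > 0" and q: "\<forall>t. w^2 \<le> q t"
  shows "\<exists>t\<in>{c..c+pi/w}. \<xi> t = 0"
proof (rule ccontr)
  assume nz: "\<not> (\<exists>t\<in>{c..c+pi/w}. \<xi> t = 0)"
  have cb: "c \<le> c + pi / w" using w by simp
  have sign: "\<forall>t\<in>{c..c+pi/w}. \<eta> t > 0"
    if "hill_solution q \<eta> \<eta>'" "\<forall>t\<in>{c..c+pi/w}. \<eta> t \<noteq> 0" "\<eta> c > 0" for \<eta> \<eta>'
    using connected_pos_if_nonzero[OF connected_Icc hill_solution_continuous_on(1)[OF that(1)] that(2)]
      that(3) cb by (meson atLeastAtMost_iff order_refl)
  obtain \<eta> \<eta>' where hs': "hill_solution q \<eta> \<eta>'" and pos: "\<forall>t\<in>{c..c+pi/w}. \<eta> t > 0"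
  proof (cases "\<xi> c > 0")
    case True
    then show ?thesis using that[OF hs] sign[OF hs] nz by auto
  next
    case False
    then have "- \<xi> c > 0" using nz cb by fastforce
    then show ?thesis
      using that[OF hill_solution_uminus[OF hs]] sign[OF hill_solution_uminus[OF hs]] nz by auto
  qed
  let ?W = "\<lambda>t. \<eta>' t * sin (w * (t - c)) - \<eta> t * (w * cos (w * (t - c)))"
  have "?W (c + pi / w) \<le> ?W c"
  proof (rule DERIV_nonpos_imp_nonincreasing[OF cb])
    fix x assume x: "c \<le> x" "x \<le> c + pi / w"
    have "sin (w * (x - c)) \<ge> 0" using x w by (intro sin_ge_zero) (auto simp: field_simps)
    moreover have "w^2 - q x \<le> 0" "\<eta> x > 0" using q pos x by auto
    ultimately have "(w^2 - q x) * \<eta> x * sin (w * (x - c)) \<le> 0"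
      by (intro mult_nonpos_nonneg) auto
    then show "\<exists>y. (?W has_real_derivative y) (at x) \<and> y \<le> 0"
      using hill_sturm_deriv[OF hs'] by blast
  qed
  moreover have "?W c = - (\<eta> c * w)" "?W (c + pi / w) = \<eta> (c + pi / w) * w" using w by simp_all
  moreover have "0 < \<eta> c * w" "0 < \<eta> (c + pi / w) * w" using pos cb w by simp_all
  ultimately show False by linarith
qed

lemma hill_sturm_no_short_hump:
  assumes hs: "hill_solution q \<xi> \<xi>'" and w: "w > 0" and q: "\<forall>t. q t \<le> w^2"
    and K: "\<forall>t. \<bar>q t\<bar> \<le> K" and zeros: "\<xi> p = 0" "\<xi> d = 0"
    and pd: "p < d" "d < p + pi / w" and pos: "\<forall>t\<in>{p<..<d}. \<xi> t > 0"
  shows "\<xi> t = 0 \<and> \<xi>' t = 0"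
proof -
  let ?W = "\<lambda>t. \<xi>' t * sin (w * (t - p)) - \<xi> t * (w * cos (w * (t - p)))"
  have "?W p \<le> ?W d"
  proof (rule DERIV_nonneg_imp_nondecreasing[of p d ?W])
    fix x assume x: "p \<le> x" "x \<le> d"
    have "\<xi> x \<ge> 0" using pos zeros x by (cases "x = p \<or> x = d") (auto simp: less_le)
    moreover have "x - p \<le> pi / w" using x pd by simp
    then have "sin (w * (x - p)) \<ge> 0" using x w by (intro sin_ge_zero) (auto simp: field_simps)
    ultimately have "0 \<le> (w^2 - q x) * \<xi> x * sin (w * (x - p))" using q by simp
    then show "\<exists>y. (?W has_real_derivative y) (at x) \<and> 0 \<le> y"
      using hill_sturm_deriv[OF hs] by blast
  qed (use pd in simp)
  moreover have "sin (w * (d - p)) > 0" using pd w by (intro sin_gt_zero) (auto simp: field_simps)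
  ultimately have "\<xi>' d \<ge> 0" using zeros by (simp add: zero_le_mult_iff)
  moreover have "\<not> \<xi>' d > 0"
  proof
    assume "\<xi>' d > 0"
    then obtain e where e: "e > 0" "\<And>h. h > 0 \<Longrightarrow> h < e \<Longrightarrow> \<xi> (d - h) < \<xi> d"
      using DERIV_pos_inc_left[OF hill_solutionD(1)[OF hs]] by blast
    define h where "h = min e (d - p) / 2"
    have h: "0 < h" "h < e" "h < d - p" using e(1) pd by (auto simp: h_def min_def)
    then have "\<xi> (d - h) < 0" using e(2) zeros by simp
    moreover have "\<xi> (d - h) > 0" using pos h by simp
    ultimately show False by simp
  qed
  ultimately show ?thesis using hill_solution_eq_0[OF hs K zeros(2)] by force
qed

lemma hill_sturm_zero_gap:
  assumes hs: "hill_solution q \<xi> \<xi>'" and w: "w > 0" and q: "\<forall>t. q t \<le> w^2"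
    and K: "\<forall>t. \<bar>q t\<bar> \<le> K" and nontrivial: "\<xi> 0 \<noteq> 0 \<or> \<xi>' 0 \<noteq> 0"
    and zeros: "\<xi> p = 0" "\<xi> r = 0" "p < r"
  shows "pi / w \<le> r - p"
proof (rule ccontr)
  assume short: "\<not> pi / w \<le> r - p"
  have "\<xi>' p \<noteq> 0" using hill_solution_eq_0[OF hs K zeros(1)] nontrivial by blast
  then obtain \<eta> \<eta>' where hs': "hill_solution q \<eta> \<eta>'" and "\<eta> p = 0" "\<eta> r = 0" "\<eta>' p > 0"
    and nontrivial': "\<eta> 0 \<noteq> 0 \<or> \<eta>' 0 \<noteq> 0"
  proof (cases "\<xi>' p > 0")
    case True
    then show ?thesis using that[OF hs] zeros nontrivial by blast
  next
    case False
    then have "- \<xi>' p > 0" using \<open>\<xi>' p \<noteq> 0\<close> by simp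
    then show ?thesis using that[OF hill_solution_uminus[OF hs]] zeros nontrivial by simp
  qed
  then obtain \<delta> where \<delta>: "\<delta> > 0" "\<And>h. h > 0 \<Longrightarrow> h < \<delta> \<Longrightarrow> \<eta> (p + h) > 0"
    using DERIV_pos_inc_right[OF hill_solutionD(1)[OF hs']] by fastforce
  define a where "a = p + min \<delta> (r - p) / 2"
  have "min \<delta> (r - p) / 2 < \<delta>" "min \<delta> (r - p) / 2 < r - p" "0 < min \<delta> (r - p) / 2"
    using \<delta>(1) zeros(3) by (auto simp: min_def)
  then have a: "p < a" "a < r" "\<forall>t\<in>{p<..a}. \<eta> t > 0"
    using \<delta>(2)[of "t - p" for t] by (auto simp: a_def)
  obtain d where d: "a < d" "d \<le> r" "\<eta> d = 0" "\<forall>t\<in>{a..<d}. \<eta> t > 0"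
    using first_zero_after[OF hill_solution_continuous_on(1)[OF hs'], of a r] a \<open>\<eta> r = 0\<close> by auto
  have "\<forall>t\<in>{p<..<d}. \<eta> t > 0"
  proof
    fix t assume "t \<in> {p<..<d}"
    then show "\<eta> t > 0" using a(3) d(4) by (cases "t \<le> a") auto
  qed
  then have "\<eta> 0 = 0 \<and> \<eta>' 0 = 0"
    using hill_sturm_no_short_hump[OF hs' w q K \<open>\<eta> p = 0\<close> d(3)] short a(1) d(1,2) by auto
  then show False using nontrivial' by simp
qed

definition hill_fundamental_system ::
    "(real \<Rightarrow> real) \<Rightarrow> (real \<Rightarrow> real) \<Rightarrow> (real \<Rightarrow> real) \<Rightarrow> (real \<Rightarrow> real) \<Rightarrow> (real \<Rightarrow> real) \<Rightarrow> bool" where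
  "hill_fundamental_system q \<phi>1 \<phi>1' \<phi>2 \<phi>2' \<longleftrightarrow>
     hill_solution q \<phi>1 \<phi>1' \<and> hill_solution q \<phi>2 \<phi>2' \<and>
     \<phi>1 0 = 1 \<and> \<phi>1' 0 = 0 \<and> \<phi>2 0 = 0 \<and> \<phi>2' 0 = 1"

lemma hill_fundamental_system_repr:
  assumes fs: "hill_fundamental_system q \<phi>1 \<phi>1' \<phi>2 \<phi>2'"
    and hs: "hill_solution q \<xi> \<xi>'" and K: "\<forall>t. \<bar>q t\<bar> \<le> K"
  shows "\<xi> t = \<xi> 0 * \<phi>1 t + \<xi>' 0 * \<phi>2 t \<and> \<xi>' t = \<xi> 0 * \<phi>1' t + \<xi>' 0 * \<phi>2' t"
proof -
  have "hill_solution q (\<lambda>t. \<xi> 0 * \<phi>1 t + \<xi>' 0 * \<phi>2 t) (\<lambda>t. \<xi> 0 * \<phi>1' t + \<xi>' 0 * \<phi>2' t)"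
    using fs by (intro hill_solution_lincomb) (auto simp: hill_fundamental_system_def)
  then have "hill_solution q (\<lambda>t. 1 * \<xi> t + (-1) * (\<xi> 0 * \<phi>1 t + \<xi>' 0 * \<phi>2 t))
      (\<lambda>t. 1 * \<xi>' t + (-1) * (\<xi> 0 * \<phi>1' t + \<xi>' 0 * \<phi>2' t))"
    using hs by (rule hill_solution_lincomb[rotated])
  from hill_solution_eq_0[OF this K, of 0 t] fs show ?thesis
    by (simp add: hill_fundamental_system_def)
qed

lemma hill_fundamental_system_exists:
  assumes "hill_solution q \<xi> \<xi>'" "hill_solution q \<eta> \<eta>'" and W: "\<xi> 0 * \<eta>' 0 - \<xi>' 0 * \<eta> 0 \<noteq> 0"
  obtains \<phi>1 \<phi>1' \<phi>2 \<phi>2' where "hill_fundamental_system q \<phi>1 \<phi>1' \<phi>2 \<phi>2'"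
proof -
  define W where "W = \<xi> 0 * \<eta>' 0 - \<xi>' 0 * \<eta> 0"
  have "W \<noteq> 0" using W by (simp add: W_def)
  then have init: "(\<eta>' 0 / W) * \<xi> 0 + (- \<xi>' 0 / W) * \<eta> 0 = 1" "(\<eta>' 0 / W) * \<xi>' 0 + (- \<xi>' 0 / W) * \<eta>' 0 = 0"
    "(- \<eta> 0 / W) * \<xi> 0 + (\<xi> 0 / W) * \<eta> 0 = 0" "(- \<eta> 0 / W) * \<xi>' 0 + (\<xi> 0 / W) * \<eta>' 0 = 1"
    using W_def by (simp_all add: field_simps)
  then have "hill_fundamental_system q
      (\<lambda>t. (\<eta>' 0 / W) * \<xi> t + (- \<xi>' 0 / W) * \<eta> t) (\<lambda>t. (\<eta>' 0 / W) * \<xi>' t + (- \<xi>' 0 / W) * \<eta>' t)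
      (\<lambda>t. (- \<eta> 0 / W) * \<xi> t + (\<xi> 0 / W) * \<eta> t) (\<lambda>t. (- \<eta> 0 / W) * \<xi>' t + (\<xi> 0 / W) * \<eta>' t)"
    unfolding hill_fundamental_system_def by (intro conjI hill_solution_lincomb assms(1,2) init)
  then show ?thesis using that by blast
qed

lemma hill_lyapunov_stable_if_fundamental_bounded:
  assumes fs: "hill_fundamental_system q \<phi>1 \<phi>1' \<phi>2 \<phi>2'" and K: "\<forall>t. \<bar>q t\<bar> \<le> K"
    and M: "\<forall>t\<ge>0. \<bar>\<phi>1 t\<bar> + \<bar>\<phi>2 t\<bar> \<le> M \<and> \<bar>\<phi>1' t\<bar> + \<bar>\<phi>2' t\<bar> \<le> M"
  shows "hill_lyapunov_stable q"
  unfolding hill_lyapunov_stable_def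
proof (intro allI impI)
  fix \<epsilon> :: real assume "\<epsilon> > 0"
  have M0: "M \<ge> 0" using M by force
  define \<delta> where "\<delta> = \<epsilon> / (M + 1)"
  have \<delta>: "\<delta> > 0" "\<delta> * M < \<epsilon>"
    using \<open>\<epsilon> > 0\<close> M0 by (auto simp: \<delta>_def field_simps)
  have small: "\<bar>\<xi> t\<bar> < \<epsilon> \<and> \<bar>\<xi>' t\<bar> < \<epsilon>"
    if "hill_solution q \<xi> \<xi>'" "\<bar>\<xi> 0\<bar> < \<delta>" "\<bar>\<xi>' 0\<bar> < \<delta>" "t \<ge> 0" for \<xi> \<xi>' t
  proof -
    have repr: "\<xi> t = \<xi> 0 * \<phi>1 t + \<xi>' 0 * \<phi>2 t" "\<xi>' t = \<xi> 0 * \<phi>1' t + \<xi>' 0 * \<phi>2' t"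
      using hill_fundamental_system_repr[OF fs that(1) K, of t] by auto
    have "\<bar>\<phi>1 t\<bar> + \<bar>\<phi>2 t\<bar> \<le> M" "\<bar>\<phi>1' t\<bar> + \<bar>\<phi>2' t\<bar> \<le> M" using M that(4) by auto
    then have "\<bar>\<xi> t\<bar> \<le> \<delta> * M" "\<bar>\<xi>' t\<bar> \<le> \<delta> * M"
      unfolding repr using abs_lincomb_le that(2,3) less_imp_le by metis+
    then show ?thesis using \<delta>(2) by linarith
  qed
  show "\<exists>\<delta>>0. \<forall>\<xi> \<xi>'. hill_solution q \<xi> \<xi>' \<and> \<bar>\<xi> 0\<bar> < \<delta> \<and> \<bar>\<xi>' 0\<bar> < \<delta> \<longrightarrow>
      (\<forall>t\<ge>0. \<bar>\<xi> t\<bar> < \<epsilon> \<and> \<bar>\<xi>' t\<bar> < \<epsilon>)"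
  proof (intro exI[of _ \<delta>] conjI[OF \<delta>(1)] allI impI)
    fix \<xi> \<xi>' and t :: real
    assume "hill_solution q \<xi> \<xi>' \<and> \<bar>\<xi> 0\<bar> < \<delta> \<and> \<bar>\<xi>' 0\<bar> < \<delta>" "0 \<le> t"
    then show "\<bar>\<xi> t\<bar> < \<epsilon> \<and> \<bar>\<xi>' t\<bar> < \<epsilon>" using small[of \<xi> \<xi>' t] by simp
  qed
qed

lemma hill_fundamental_system_repr_shift:
  assumes per: "\<forall>t. q (t + T) = q t" and K: "\<forall>t. \<bar>q t\<bar> \<le> K"
    and fs: "hill_fundamental_system q \<phi>1 \<phi>1' \<phi>2 \<phi>2'" and hs: "hill_solution q \<xi> \<xi>'"
  shows "\<xi> (real n * T + s) = \<xi> (real n * T) * \<phi>1 s + \<xi>' (real n * T) * \<phi>2 s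
    \<and> \<xi>' (real n * T + s) = \<xi> (real n * T) * \<phi>1' s + \<xi>' (real n * T) * \<phi>2' s"
proof -
  have "hill_solution q (\<lambda>t. \<xi> (t + real n * T)) (\<lambda>t. \<xi>' (t + real n * T))"
    using hill_solution_shift[OF hs] periodic_add_mult[OF per] by blast
  from hill_fundamental_system_repr[OF fs this K, of s] show ?thesis by (simp add: add.commute)
qed

text \<open>The Wronskian of \<open>\<xi>\<close> and its translate by the period is constant; in the coordinates
  \<open>(\<xi>(nT), \<xi>'(nT))\<close> it is a quadratic form built from the monodromy matrix.\<close>
lemma hill_monodromy_form_invariant:
  assumes per: "\<forall>t. q (t + T) = q t" and K: "\<forall>t. \<bar>q t\<bar> \<le> K"
    and fs: "hill_fundamental_system q \<phi>1 \<phi>1' \<phi>2 \<phi>2'" and hs: "hill_solution q \<xi> \<xi>'"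
  shows "\<phi>1' T * (\<xi> (real n * T))^2 + (\<phi>2' T - \<phi>1 T) * \<xi> (real n * T) * \<xi>' (real n * T)
      + (- \<phi>2 T) * (\<xi>' (real n * T))^2 = \<xi> 0 * \<xi>' T - \<xi>' 0 * \<xi> T"
proof -
  have "\<xi> (real n * T) * \<xi>' (real n * T + T) - \<xi>' (real n * T) * \<xi> (real n * T + T)
      = \<xi> 0 * \<xi>' T - \<xi>' 0 * \<xi> T"
    using hill_wronskian_const[OF hs hill_solution_shift[OF hs per], of "real n * T" 0] by simp
  then show ?thesis
    using hill_fundamental_system_repr_shift[OF per K fs hs, of n T]
    by (simp add: algebra_simps power2_eq_square)
qed

lemma hill_solution_bounded_if_bounded_at_multiples:
  assumes T: "T > 0" and per: "\<forall>t. q (t + T) = q t" and K: "\<forall>t. \<bar>q t\<bar> \<le> K"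
    and fs: "hill_fundamental_system q \<phi>1 \<phi>1' \<phi>2 \<phi>2'" and hs: "hill_solution q \<xi> \<xi>'"
    and R: "\<And>n. \<bar>\<xi> (real n * T)\<bar> \<le> R \<and> \<bar>\<xi>' (real n * T)\<bar> \<le> R"
  obtains M where "\<forall>t\<ge>0. \<bar>\<xi> t\<bar> \<le> M \<and> \<bar>\<xi>' t\<bar> \<le> M"
proof -
  have "hill_solution q \<phi>1 \<phi>1'" "hill_solution q \<phi>2 \<phi>2'"
    using fs by (auto simp: hill_fundamental_system_def)
  then have "continuous_on {0..T} (\<lambda>s. \<bar>\<phi>1 s\<bar> + \<bar>\<phi>2 s\<bar> + \<bar>\<phi>1' s\<bar> + \<bar>\<phi>2' s\<bar>)"
    by (intro continuous_on_add continuous_on_rabs hill_solution_continuous_on)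
  then obtain B
    where "B \<ge> 0" and B: "\<And>s. s \<in> {0..T} \<Longrightarrow> norm (\<bar>\<phi>1 s\<bar> + \<bar>\<phi>2 s\<bar> + \<bar>\<phi>1' s\<bar> + \<bar>\<phi>2' s\<bar>) \<le> B"
    by (rule continuous_on_compact_bound[OF compact_Icc]) blast
  have "\<bar>\<xi> t\<bar> \<le> R * B \<and> \<bar>\<xi>' t\<bar> \<le> R * B" if "t \<ge> 0" for t
  proof -
    define n where "n = nat \<lfloor>t / T\<rfloor>"
    have "real n * T \<le> t" "t < real n * T + T"
      using floor_divide_lower[OF T, of t] floor_divide_upper[OF T, of t] that T
      by (simp_all add: n_def algebra_simps)
    then have s: "t - real n * T \<in> {0..T}" by simp
    have repr: "\<xi> t = \<xi> (real n * T) * \<phi>1 (t - real n * T) + \<xi>' (real n * T) * \<phi>2 (t - real n * T)"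
      "\<xi>' t = \<xi> (real n * T) * \<phi>1' (t - real n * T) + \<xi>' (real n * T) * \<phi>2' (t - real n * T)"
      using hill_fundamental_system_repr_shift[OF per K fs hs, of n "t - real n * T"] by auto
    from B[OF s] have "\<bar>\<phi>1 (t - real n * T)\<bar> + \<bar>\<phi>2 (t - real n * T)\<bar> \<le> B"
      "\<bar>\<phi>1' (t - real n * T)\<bar> + \<bar>\<phi>2' (t - real n * T)\<bar> \<le> B"
      unfolding real_norm_def by linarith+
    then show ?thesis unfolding repr using abs_lincomb_le R[of n] by blast
  qed
  then show ?thesis using that by blast
qed

section \<open>Zhukovskii's criterion\<close>

context
  fixes q :: "real \<Rightarrow> real" and T wa wb :: real
  assumes T: "T > 0" and per: "\<forall>t. q (t + T) = q t" and wa: "wa > 0" and wb: "wb > 0"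
    and qa: "\<forall>t. wa^2 \<le> q t" and qb: "\<forall>t. q t \<le> wb^2" and Tlo: "pi / wa < T" and Thi: "T < 2 * pi / wb"
begin

lemma zhukovskii_abs_le: "\<forall>t. \<bar>q t\<bar> \<le> wb^2"
  using qa qb by (metis abs_of_nonneg order_trans zero_le_power2)

text \<open>Every solution has a zero in each interval of length \<open>\<pi>/wa\<close>, but consecutive zeros are at
  least \<open>\<pi>/wb\<close> apart. If \<open>\<xi>(t + T) = \<lambda> \<xi>(t)\<close>, zeros repeat with period \<open>T\<close>, and then a
  zero \<open>z\<close> and the zero \<open>z + T\<close> would enclose another zero, forcing \<open>T \<ge> 2\<pi>/wb\<close>.\<close>
lemma zhukovskii_no_real_multiplier:
  assumes hs: "hill_solution q \<xi> \<xi>'" and nontrivial: "\<xi> 0 \<noteq> 0 \<or> \<xi>' 0 \<noteq> 0"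
  shows "\<xi> 0 * \<xi>' T - \<xi>' 0 * \<xi> T \<noteq> 0"
proof
  assume W: "\<xi> 0 * \<xi>' T - \<xi>' 0 * \<xi> T = 0"
  obtain l where l: "\<xi> T = l * \<xi> 0" "\<xi>' T = l * \<xi>' 0"
  proof (cases "\<xi> 0 = 0")
    case True
    then show ?thesis using that[of "\<xi>' T / \<xi>' 0"] W nontrivial by simp
  next
    case False
    then show ?thesis using that[of "\<xi> T / \<xi> 0"] W by (simp add: field_simps)
  qed
  have sol: "hill_solution q (\<lambda>t. 1 * \<xi> (t + T) + (- l) * \<xi> t) (\<lambda>t. 1 * \<xi>' (t + T) + (- l) * \<xi>' t)"
    by (intro hill_solution_lincomb hill_solution_shift[OF hs per] hs)
  have translate: "\<xi> (t + T) = l * \<xi> t" for t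
    using hill_solution_eq_0[OF sol zhukovskii_abs_le, of 0 t] l by simp
  obtain z where z: "z \<in> {0..0 + pi / wa}" "\<xi> z = 0"
    using hill_sturm_zero_in_interval[OF hs wa qa] by blast
  define c where "c = z + (T - pi / wa) / 2"
  obtain u where u: "u \<in> {c..c + pi / wa}" "\<xi> u = 0"
    using hill_sturm_zero_in_interval[OF hs wa qa] by blast
  have "z < u" "u < z + T" using u(1) Tlo by (auto simp: c_def field_simps)
  moreover have "\<xi> (z + T) = 0" using translate[of z] z(2) by simp
  ultimately have "pi / wb \<le> u - z" "pi / wb \<le> (z + T) - u"
    using hill_sturm_zero_gap[OF hs wb qb zhukovskii_abs_le nontrivial] z(2) u(2) by blast+
  then show False using Thi by simp
qed

lemma zhukovskii_monodromy_form_coercive: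
  assumes fs: "hill_fundamental_system q \<phi>1 \<phi>1' \<phi>2 \<phi>2'"
  obtains m where "m > 0"
    "\<And>a b. m * (a^2 + b^2) \<le> \<bar>\<phi>1' T * a^2 + (\<phi>2' T - \<phi>1 T) * a * b + (- \<phi>2 T) * b^2\<bar>"
proof (rule quadratic_form_coercive)
  fix a b :: real assume "(a, b) \<noteq> (0, 0)"
  moreover have "hill_solution q (\<lambda>t. a * \<phi>1 t + b * \<phi>2 t) (\<lambda>t. a * \<phi>1' t + b * \<phi>2' t)"
    using fs by (intro hill_solution_lincomb) (auto simp: hill_fundamental_system_def)
  ultimately show "\<phi>1' T * a^2 + (\<phi>2' T - \<phi>1 T) * a * b + (- \<phi>2 T) * b^2 \<noteq> 0"
    using zhukovskii_no_real_multiplier fs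
    by (fastforce simp: hill_fundamental_system_def algebra_simps power2_eq_square)
qed (rule that)

lemma zhukovskii_solution_bounded:
  assumes fs: "hill_fundamental_system q \<phi>1 \<phi>1' \<phi>2 \<phi>2'" and hs: "hill_solution q \<xi> \<xi>'"
  obtains M where "\<forall>t\<ge>0. \<bar>\<xi> t\<bar> \<le> M \<and> \<bar>\<xi>' t\<bar> \<le> M"
proof -
  obtain m where m: "m > 0"
    "\<And>a b. m * (a^2 + b^2) \<le> \<bar>\<phi>1' T * a^2 + (\<phi>2' T - \<phi>1 T) * a * b + (- \<phi>2 T) * b^2\<bar>"
    using zhukovskii_monodromy_form_coercive[OF fs] by blast
  have "\<bar>\<xi> (real n * T)\<bar> \<le> sqrt (\<bar>\<xi> 0 * \<xi>' T - \<xi>' 0 * \<xi> T\<bar> / m)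
      \<and> \<bar>\<xi>' (real n * T)\<bar> \<le> sqrt (\<bar>\<xi> 0 * \<xi>' T - \<xi>' 0 * \<xi> T\<bar> / m)" for n
  proof -
    have "m * ((\<xi> (real n * T))^2 + (\<xi>' (real n * T))^2) \<le> \<bar>\<xi> 0 * \<xi>' T - \<xi>' 0 * \<xi> T\<bar>"
      using m(2)[of "\<xi> (real n * T)" "\<xi>' (real n * T)"]
        hill_monodromy_form_invariant[OF per zhukovskii_abs_le fs hs, of n] by simp
    then have "(\<xi> (real n * T))^2 + (\<xi>' (real n * T))^2 \<le> \<bar>\<xi> 0 * \<xi>' T - \<xi>' 0 * \<xi> T\<bar> / m"
      using m(1) by (simp add: field_simps)
    then have "(\<xi> (real n * T))^2 \<le> \<bar>\<xi> 0 * \<xi>' T - \<xi>' 0 * \<xi> T\<bar> / m"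
      "(\<xi>' (real n * T))^2 \<le> \<bar>\<xi> 0 * \<xi>' T - \<xi>' 0 * \<xi> T\<bar> / m"
      using zero_le_power2[of "\<xi> (real n * T)"] zero_le_power2[of "\<xi>' (real n * T)"] by linarith+
    then show ?thesis by (simp add: real_le_rsqrt)
  qed
  from hill_solution_bounded_if_bounded_at_multiples[OF T per zhukovskii_abs_le fs hs this] that
  show ?thesis by blast
qed

text \<open>No existence theorem for solutions is available (\<open>q\<close> need not be continuous), so the fundamental
  system is built from a nontrivial solution and its translate, when there is one.\<close>
lemma hill_lyapunov_stable_zhukovskii: "hill_lyapunov_stable q"
proof (cases "\<exists>\<xi> \<xi>'. hill_solution q \<xi> \<xi>' \<and> (\<xi> 0 \<noteq> 0 \<or> \<xi>' 0 \<noteq> 0)")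
  case False
  then have "\<xi> t = 0 \<and> \<xi>' t = 0" if "hill_solution q \<xi> \<xi>'" for \<xi> \<xi>' t
    using hill_solution_eq_0[OF that zhukovskii_abs_le] that by blast
  then show ?thesis unfolding hill_lyapunov_stable_def by (metis zero_less_one)
next
  case True
  then obtain \<xi> \<xi>' where hs: "hill_solution q \<xi> \<xi>'" and "\<xi> 0 \<noteq> 0 \<or> \<xi>' 0 \<noteq> 0" by blast
  then have "\<xi> 0 * \<xi>' (0 + T) - \<xi>' 0 * \<xi> (0 + T) \<noteq> 0"
    using zhukovskii_no_real_multiplier by simp
  then obtain \<phi>1 \<phi>1' \<phi>2 \<phi>2' where fs: "hill_fundamental_system q \<phi>1 \<phi>1' \<phi>2 \<phi>2'"
    by (rule hill_fundamental_system_exists[OF hs hill_solution_shift[OF hs per]]) blast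
  then have "hill_solution q \<phi>1 \<phi>1'" "hill_solution q \<phi>2 \<phi>2'"
    by (auto simp: hill_fundamental_system_def)
  obtain M1 where "\<forall>t\<ge>0. \<bar>\<phi>1 t\<bar> \<le> M1 \<and> \<bar>\<phi>1' t\<bar> \<le> M1"
    by (rule zhukovskii_solution_bounded[OF fs \<open>hill_solution q \<phi>1 \<phi>1'\<close>]) blast
  moreover obtain M2 where "\<forall>t\<ge>0. \<bar>\<phi>2 t\<bar> \<le> M2 \<and> \<bar>\<phi>2' t\<bar> \<le> M2"
    by (rule zhukovskii_solution_bounded[OF fs \<open>hill_solution q \<phi>2 \<phi>2'\<close>]) blast
  ultimately have "\<forall>t\<ge>0. \<bar>\<phi>1 t\<bar> + \<bar>\<phi>2 t\<bar> \<le> M1 + M2 \<and> \<bar>\<phi>1' t\<bar> + \<bar>\<phi>2' t\<bar> \<le> M1 + M2"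
    by (simp add: add_mono)
  then show ?thesis by (rule hill_lyapunov_stable_if_fundamental_bounded[OF fs zhukovskii_abs_le])
qed

end

section \<open>The first vertical mode\<close>

definition duffing_solution :: "(real \<Rightarrow> real) \<Rightarrow> (real \<Rightarrow> real) \<Rightarrow> bool" where
  "duffing_solution u u' \<longleftrightarrow>
     (\<forall>t. (u has_real_derivative u' t) (at t) \<and> (u' has_real_derivative - (3 * u t + 3/2 * (u t)^3)) (at t))"

definition duffing_potential :: "real \<Rightarrow> real" where
  "duffing_potential x = 3/2 * x^2 + 3/8 * x^4"

lemma duffing_solutionD:
  assumes "duffing_solution u u'"
  shows "(u has_real_derivative u' t) (at t)" "(u' has_real_derivative - (3 * u t + 3/2 * (u t)^3)) (at t)"
  using assms unfolding duffing_solution_def by blast+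

lemma duffing_solution_continuous_on:
  assumes "duffing_solution u u'"
  shows "continuous_on S u" "continuous_on S u'"
  using duffing_solutionD[OF assms] by (meson DERIV_isCont continuous_at_imp_continuous_on)+

lemma duffing_solution_uminus:
  assumes "duffing_solution u u'"
  shows "duffing_solution (\<lambda>t. - u t) (\<lambda>t. - u' t)"
  unfolding duffing_solution_def
  using DERIV_minus[OF duffing_solutionD(1)[OF assms]] DERIV_minus[OF duffing_solutionD(2)[OF assms]]
  by simp

lemma duffing_solution_reflect:
  assumes "duffing_solution u u'"
  shows "duffing_solution (\<lambda>t. u (2 * c - t)) (\<lambda>t. - u' (2 * c - t))"
  unfolding duffing_solution_def
proof
  fix t
  have reflect: "((\<lambda>t. 2 * c - t) has_real_derivative -1) (at t)"
    by (auto intro!: derivative_eq_intros)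
  show "((\<lambda>t. u (2 * c - t)) has_real_derivative - u' (2 * c - t)) (at t) \<and>
      ((\<lambda>t. - u' (2 * c - t)) has_real_derivative - (3 * u (2 * c - t) + 3/2 * (u (2 * c - t))^3)) (at t)"
    using DERIV_chain2[OF duffing_solutionD(1)[OF assms] reflect]
      DERIV_minus[OF DERIV_chain2[OF duffing_solutionD(2)[OF assms] reflect]] by (simp add: algebra_simps)
qed

lemma duffing_energy_const:
  assumes "duffing_solution u u'"
  shows "(u' t)^2 / 2 + duffing_potential (u t) = (u' s)^2 / 2 + duffing_potential (u s)"
proof (rule DERIV_isconst_all[where f = "\<lambda>t. (u' t)^2 / 2 + duffing_potential (u t)"], intro allI)
  fix x
  note D = duffing_solutionD[OF assms, of x]
  show "((\<lambda>t. (u' t)^2 / 2 + duffing_potential (u t)) has_real_derivative 0) (at x)"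
    unfolding duffing_potential_def
    by (auto intro!: derivative_eq_intros D simp: field_simps power2_eq_square power3_eq_cube)
qed

lemma duffing_potential_le_iff: "duffing_potential x \<le> duffing_potential z \<longleftrightarrow> x^2 \<le> z^2"
proof -
  have V: "duffing_potential x = 3/2 * x^2 + 3/8 * (x^2)^2" for x
    by (simp add: duffing_potential_def power_mult[symmetric])
  have less: "duffing_potential x < duffing_potential z" if "x^2 < z^2" for x z
    unfolding V using that power_strict_mono[OF that zero_le_power2, of 2] by simp
  show ?thesis
  proof
    assume "duffing_potential x \<le> duffing_potential z"
    then show "x^2 \<le> z^2" by (meson less not_le)
  next
    assume "x^2 \<le> z^2"
    then show "duffing_potential x \<le> duffing_potential z"
      using less[of x z] by (cases "x^2 = z^2") (auto simp: V)
  qed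
qed

text \<open>The difference of two solutions solves a Hill equation with coefficient
  \<open>3 + 3/2 (u\<^sup>2 + u w + w\<^sup>2)\<close>, which is bounded as long as both solutions are.\<close>
lemma duffing_solution_unique:
  assumes hu: "duffing_solution u u'" and hw: "duffing_solution w w'"
    and B: "\<forall>t. \<bar>u t\<bar> \<le> B" "\<forall>t. \<bar>w t\<bar> \<le> B" and s: "u s = w s" "u' s = w' s"
  shows "u t = w t"
proof -
  define g where "g t = 3 + 3/2 * ((u t)^2 + u t * w t + (w t)^2)" for t
  have hs: "hill_solution g (\<lambda>t. u t - w t) (\<lambda>t. u' t - w' t)"
    unfolding hill_solution_def
  proof
    fix t
    have eq: "- (3 * u t + 3/2 * (u t)^3) - - (3 * w t + 3/2 * (w t)^3) = - g t * (u t - w t)"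
      unfolding g_def by (simp add: field_simps power2_eq_square power3_eq_cube)
    show "((\<lambda>t. u t - w t) has_real_derivative u' t - w' t) (at t) \<and>
        ((\<lambda>t. u' t - w' t) has_real_derivative - g t * (u t - w t)) (at t)"
      using DERIV_diff[OF duffing_solutionD(1)[OF hu] duffing_solutionD(1)[OF hw]]
        DERIV_cong[OF DERIV_diff[OF duffing_solutionD(2)[OF hu] duffing_solutionD(2)[OF hw]] eq]
      by simp
  qed
  have K: "\<forall>t. \<bar>g t\<bar> \<le> 3 + 9/2 * B^2"
  proof
    fix t
    have a: "\<bar>u t\<bar> \<le> B" "\<bar>w t\<bar> \<le> B" using B by blast+
    then have "(u t)^2 \<le> B^2" "(w t)^2 \<le> B^2"
      using power_mono[OF a(1) abs_ge_zero, of 2] power_mono[OF a(2) abs_ge_zero, of 2] by simp_all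
    moreover have "\<bar>u t * w t\<bar> \<le> B^2"
      unfolding abs_mult power2_eq_square using a by (intro mult_mono) auto
    moreover have "(u t)^2 + u t * w t + (w t)^2 = (u t + w t / 2)^2 + 3/4 * (w t)^2"
      by (simp add: power2_eq_square algebra_simps)
    then have "0 \<le> (u t)^2 + u t * w t + (w t)^2" by simp
    ultimately show "\<bar>g t\<bar> \<le> 3 + 9/2 * B^2" unfolding g_def by (simp add: abs_le_iff)
  qed
  have "u t - w t = 0 \<and> u' t - w' t = 0"
    using hill_solution_eq_0[OF hs K, of s t] s by simp
  then show ?thesis by simp
qed

lemma duffing_force_mono: "x \<le> y \<Longrightarrow> 3 * x + 3/2 * x^3 \<le> 3 * y + 3/2 * (y::real)^3"
  using power_mono_odd[of 3 x y] by simp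

text \<open>A solution cannot stay positive: once \<open>u'\<close> is negative it stays below that value, and
  while \<open>u' \<ge> 0\<close> the restoring force keeps \<open>u''\<close> below a negative constant.\<close>
lemma duffing_not_eventually_pos:
  assumes hs: "duffing_solution u u'"
  shows "\<exists>t\<ge>a. u t \<le> 0"
proof (rule ccontr)
  assume "\<not> (\<exists>t\<ge>a. u t \<le> 0)"
  then have pos: "u t > 0" if "a \<le> t" for t using that by force
  note D = duffing_solutionD[OF hs]
  show False
  proof (cases "\<exists>b\<ge>a. u' b < 0")
    case True
    then obtain b where b: "a \<le> b" "u' b < 0" by blast
    have force_neg: "- (3 * u x + 3/2 * (u x)^3) \<le> 0" if "a \<le> x" for x
      using pos[OF that] zero_less_power[OF pos[OF that], of 3] by linarith
    have "u' x \<le> u' b + 0 * (x - b)" if "b \<le> x" for x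
      by (intro DERIV_le_imp_le_affine[OF that D(2)]) (meson force_neg b(1) order_trans)
    then have lin: "u t \<le> u b + u' b * (t - b)" if "b \<le> t" for t
      using that by (intro DERIV_le_imp_le_affine[OF that D(1)]) auto
    define t where "t = b + (u b + 1) / - u' b"
    have "b \<le> t" using b pos[of b] by (simp add: t_def divide_nonneg_neg)
    then have "u t \<le> u b + u' b * (t - b)" by (rule lin)
    also have "\<dots> = - 1" using b(2) by (simp add: t_def field_simps)
    finally have "u t \<le> - 1" .
    then show False using pos[of t] b(1) \<open>b \<le> t\<close> by linarith
  next
    case False
    define F where "F = 3 * u a + 3/2 * (u a)^3"
    have F: "F > 0" using pos[of a] by (simp add: F_def add_pos_pos)
    have "u a + 0 * (x - a) \<le> u x" if "a \<le> x" for x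
      using False that by (intro DERIV_ge_imp_ge_affine[OF that D(1)]) (auto simp: not_less)
    then have "F \<le> 3 * u x + 3/2 * (u x)^3" if "a \<le> x" for x
      unfolding F_def using duffing_force_mono that by simp
    then have lin: "u' t \<le> u' a + (- F) * (t - a)" if "a \<le> t" for t
      by (intro DERIV_le_imp_le_affine[OF that D(2)]) (meson neg_le_iff_le)
    define t where "t = a + (\<bar>u' a\<bar> + 1) / F"
    have "a \<le> t" using F by (simp add: t_def)
    then have "u' t \<le> u' a + (- F) * (t - a)" by (rule lin)
    also have "\<dots> = u' a - (\<bar>u' a\<bar> + 1)" using F by (simp add: t_def)
    also have "\<dots> < 0" using abs_ge_self[of "u' a"] by linarith
    finally have "u' t < 0" .
    then show False using False \<open>a \<le> t\<close> by force
  qed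
qed

text \<open>Otherwise \<open>u'\<close> has constant sign and \<open>u\<close> is strictly monotone, but both \<open>u\<close> and \<open>-u\<close>
  are nonpositive at arbitrarily late times.\<close>
lemma duffing_turning_point:
  assumes hs: "duffing_solution u u'"
  obtains t where "u' t = 0"
proof (rule ccontr)
  assume "\<not> thesis"
  then have nz: "\<forall>t. u' t \<noteq> 0" using that by blast
  have sign: "\<forall>t. v' t > 0" if "duffing_solution v v'" "\<forall>t. v' t \<noteq> 0" "v' 0 > 0" for v v'
    using connected_pos_if_nonzero[OF connected_UNIV duffing_solution_continuous_on(2)[OF that(1)]] that
    by blast
  obtain v v' where hv: "duffing_solution v v'" and pos: "\<forall>t. v' t > 0"
  proof (cases "u' 0 > 0")
    case True
    then show ?thesis using that[OF hs] sign[OF hs] nz by blast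
  next
    case False
    then have "- u' 0 > 0" using nz by (metis neg_0_less_iff_less not_less_iff_gr_or_eq)
    then show ?thesis
      using that[OF duffing_solution_uminus[OF hs]] sign[OF duffing_solution_uminus[OF hs]] nz by simp
  qed
  have incr: "v s < v t" if "s < t" for s t
    using DERIV_pos_imp_increasing[OF that] duffing_solutionD(1)[OF hv] pos by blast
  obtain t2 where "0 \<le> t2" "- v t2 \<le> 0"
    using duffing_not_eventually_pos[OF duffing_solution_uminus[OF hv]] by blast
  moreover obtain t3 where "t2 + 1 \<le> t3" "v t3 \<le> 0" using duffing_not_eventually_pos[OF hv] by blast
  ultimately show False using incr[of t2 t3] by linarith
qed

lemma duffing_speed_sq:
  assumes "duffing_solution u u'" "u t0 = A" "u' t0 = 0"
  shows "(u' t)^2 = (A^2 - (u t)^2) * (3 + 3/4 * (A^2 + (u t)^2))"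
  using duffing_energy_const[OF assms(1), of t t0] assms(2,3)
  by (simp add: duffing_potential_def field_simps power2_eq_square power4_eq_xxxx)

lemma duffing_quarter_wave:
  assumes hs: "duffing_solution u u'" and A: "A > 0" and t0: "u t0 = A" "u' t0 = 0"
  obtains t1 where "t0 < t1" "u t1 = 0" "\<forall>t\<in>{t0..<t1}. u t > 0"
    "\<forall>t\<in>{t0<..t1}. u' t < 0 \<and> u t < A"
proof -
  note D = duffing_solutionD[OF hs]
  obtain t2 where "t0 \<le> t2" "u t2 \<le> 0" using duffing_not_eventually_pos[OF hs] by blast
  then obtain t1 where t1: "t0 < t1" "u t1 = 0" and pos: "\<forall>t\<in>{t0..<t1}. u t > 0"
    using first_zero_after[OF duffing_solution_continuous_on(1)[OF hs], of t0 t2] t0 A by auto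
  have neg: "u' t < 0" if "t0 < t" "t \<le> t1" for t
  proof -
    have "u' t < u' t0"
    proof (rule DERIV_neg_imp_decreasing_open[OF that(1) _ duffing_solution_continuous_on(2)[OF hs]])
      fix x assume "t0 < x" "x < t"
      then have "u x > 0" using pos that by auto
      then show "\<exists>y. (u' has_real_derivative y) (at x) \<and> y < 0"
        using D(2) by (metis add_pos_pos neg_less_0_iff_less mult_pos_pos zero_less_divide_iff
            zero_less_numeral zero_less_power)
    qed
    then show ?thesis using t0 by simp
  qed
  have "u t < A" if "t0 < t" "t \<le> t1" for t
  proof -
    have "u t < u t0"
    proof (rule DERIV_neg_imp_decreasing_open[OF that(1) _ duffing_solution_continuous_on(1)[OF hs]])
      fix x assume "t0 < x" "x < t"
      then show "\<exists>y. (u has_real_derivative y) (at x) \<and> y < 0" using D(1) neg[of x] that by auto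
    qed
    then show ?thesis using t0 by simp
  qed
  with t1 pos neg that show ?thesis by auto
qed

text \<open>With \<open>\<phi> = arccos (u/A)\<close>, which runs from \<open>0\<close> to \<open>\<pi>/2\<close> over the quarter wave, the mean value
  theorem and the energy identity give \<open>\<phi>' = k\<close> with \<open>k\<^sup>2 = 3 + 3/4 (A\<^sup>2 + p\<^sup>2)\<close> at an
  intermediate amplitude \<open>p\<close>.\<close>
lemma duffing_quarter_time:
  assumes hs: "duffing_solution u u'" and A: "A > 0" and t0: "u t0 = A" "u' t0 = 0"
    and t1: "t0 < t1" "u t1 = 0" and pos: "\<forall>t\<in>{t0..<t1}. u t > 0"
    and neg: "\<forall>t\<in>{t0<..t1}. u' t < 0 \<and> u t < A"
  obtains k p where "k > 0" "(t1 - t0) * k = pi / 2" "0 < p" "p < A" "k^2 = 3 + 3/4 * (A^2 + p^2)"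
proof -
  define \<phi> where "\<phi> t = arccos (u t / A)" for t
  have "0 \<le> u t \<and> u t \<le> A" if "t \<in> {t0..t1}" for t
  proof (cases "t = t1")
    case False
    then show ?thesis using that pos neg t0 by (cases "t = t0") (auto simp: less_imp_le)
  qed (use t1 A in simp)
  then have "- 1 \<le> u t / A \<and> u t / A \<le> 1" if "t \<in> {t0..t1}" for t
    using that A by (fastforce simp: field_simps)
  then have "continuous_on {t0..t1} \<phi>"
    unfolding \<phi>_def using A
    by (intro continuous_on_arccos continuous_intros duffing_solution_continuous_on(1)[OF hs]) auto
  moreover have der: "(\<phi> has_real_derivative inverse (- sqrt (1 - (u x / A)^2)) * (u' x / A)) (at x)"
    if "t0 < x" "x < t1" for x
  proof -
    have "0 < u x" "u x < A" using pos neg that by auto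
    then have "- 1 < u x / A" "u x / A < 1" using A by (simp_all add: field_simps)
    from DERIV_chain2[OF DERIV_arccos[OF this] DERIV_cdivide[OF duffing_solutionD(1)[OF hs]]]
    show ?thesis unfolding \<phi>_def .
  qed
  ultimately obtain z l where z: "t0 < z" "z < t1" and l: "(\<phi> has_real_derivative l) (at z)"
    and mvt: "\<phi> t1 - \<phi> t0 = (t1 - t0) * l"
    using MVT[OF t1(1)] by (metis real_differentiable_def)
  have "\<phi> t1 - \<phi> t0 = pi / 2" using t0 t1 A by (simp add: \<phi>_def)
  define p where "p = u z"
  have p: "0 < p" "p < A" "u' z < 0" using pos neg z by (auto simp: p_def)
  have "p^2 < A^2" using p by (simp add: power_strict_mono)
  then have s: "0 < 1 - (p / A)^2" using A by (simp add: power_divide)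
  have l_eq: "l = - (u' z / A) / sqrt (1 - (p / A)^2)"
    using DERIV_unique[OF l der[OF z]] by (simp add: p_def divide_inverse)
  have "l > 0" using p A s unfolding l_eq by (simp add: divide_neg_pos)
  have "A^2 * (1 - (p / A)^2) = A^2 - p^2"
    using A by (simp add: power_divide field_simps)
  moreover have "l^2 = (u' z)^2 / (A^2 * (1 - (p / A)^2))"
    using s by (simp add: l_eq power_divide power_mult_distrib)
  ultimately have "l^2 = (u' z)^2 / (A^2 - p^2)" by simp
  also have "\<dots> = 3 + 3/4 * (A^2 + p^2)"
    using duffing_speed_sq[OF hs t0, of z] \<open>p^2 < A^2\<close> by (simp add: p_def)
  finally show ?thesis using that \<open>l > 0\<close> mvt \<open>\<phi> t1 - \<phi> t0 = pi / 2\<close> p by auto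
qed

text \<open>Reflection in the maximum \<open>t\<^sub>0\<close> fixes the solution and reflection in the zero \<open>t\<^sub>1\<close> negates
  it; their composition is the shift by \<open>2 (t\<^sub>1 - t\<^sub>0)\<close>.\<close>
lemma duffing_antiperiodic_from_max:
  assumes hs: "duffing_solution u u'" and A: "A > 0" and t0: "u t0 = A" "u' t0 = 0"
    and bound: "\<forall>t. \<bar>u t\<bar> \<le> A"
  obtains T where "T > 0" "\<forall>t. u (t + T) = - u t"
    "3 + 3/4 * A^2 < (pi / T)^2" "(pi / T)^2 < 3 + 3/2 * A^2"
proof -
  obtain t1 where t1: "t0 < t1" "u t1 = 0" and wave: "\<forall>t\<in>{t0..<t1}. u t > 0"
    "\<forall>t\<in>{t0<..t1}. u' t < 0 \<and> u t < A"
    using duffing_quarter_wave[OF hs A t0] by blast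
  obtain k p where k: "k > 0" "(t1 - t0) * k = pi / 2" and p: "0 < p" "p < A"
    and k2: "k^2 = 3 + 3/4 * (A^2 + p^2)"
    using duffing_quarter_time[OF hs A t0 t1 wave] by blast
  have bound_refl: "\<forall>t. \<bar>u (2 * c - t)\<bar> \<le> A" "\<forall>t. \<bar>- u (2 * c - t)\<bar> \<le> A" for c
    using bound by auto
  have even: "u (2 * t0 - t) = u t" for t
    using duffing_solution_unique[OF duffing_solution_reflect[OF hs] hs bound_refl(1) bound, where s = t0]
      t0 by simp
  have odd: "- u (2 * t1 - t) = u t" for t
    using duffing_solution_unique[OF duffing_solution_uminus[OF duffing_solution_reflect[OF hs]] hs
        bound_refl(2) bound, where s = t1] t1(2) by simp
  define T where "T = 2 * (t1 - t0)"
  have anti: "u (t + T) = - u t" for t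
    using odd[of "t + T"] even[of t] by (simp add: T_def algebra_simps)
  have T: "T > 0" "T * k = pi" using t1(1) k(2) by (simp_all add: T_def algebra_simps)
  then have "pi / T = k" by (simp add: field_simps)
  then have "(pi / T)^2 = 3 + 3/4 * (A^2 + p^2)" using k2 by simp
  moreover have "p^2 < A^2" "0 < p^2" using p by (simp_all add: power_strict_mono)
  ultimately show ?thesis using that[of T] anti T(1) by simp
qed

lemma duffing_oscillation:
  assumes hs: "duffing_solution u u'" and E: "0 < (u' 0)^2 / 2 + duffing_potential (u 0)"
  obtains A T where "A > 0" "duffing_potential A = (u' 0)^2 / 2 + duffing_potential (u 0)"
    "\<forall>t. \<bar>u t\<bar> \<le> A" "\<exists>t. \<bar>u t\<bar> = A" "T > 0" "\<forall>t. u (t + T) = - u t"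
    "3 + 3/4 * A^2 < (pi / T)^2" "(pi / T)^2 < 3 + 3/2 * A^2"
proof -
  obtain t0 where t0: "u' t0 = 0" using duffing_turning_point[OF hs] by blast
  define A where "A = \<bar>u t0\<bar>"
  have energy: "(u' t)^2 / 2 + duffing_potential (u t) = duffing_potential A" for t
    using duffing_energy_const[OF hs, of t t0] t0 by (simp add: A_def duffing_potential_def)
  have VA: "duffing_potential A = (u' 0)^2 / 2 + duffing_potential (u 0)" using energy[of 0] by simp
  have "A > 0" using E VA by (auto simp: A_def duffing_potential_def)
  have bound: "\<forall>t. \<bar>u t\<bar> \<le> A"
  proof
    fix t
    have "duffing_potential (u t) \<le> duffing_potential A"
      using energy[of t] zero_le_power2[of "u' t"] by linarith
    then show "\<bar>u t\<bar> \<le> A"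
      using \<open>A > 0\<close> abs_le_square_iff[of "u t" A] by (simp add: duffing_potential_le_iff)
  qed
  obtain T where "T > 0" "\<forall>t. u (t + T) = - u t" "3 + 3/4 * A^2 < (pi / T)^2" "(pi / T)^2 < 3 + 3/2 * A^2"
  proof (cases "u t0 \<ge> 0")
    case True
    then have "u t0 = A" by (simp add: A_def)
    from duffing_antiperiodic_from_max[OF hs \<open>A > 0\<close> this t0 bound] that show ?thesis by blast
  next
    case False
    then have "- u t0 = A" by (simp add: A_def)
    with duffing_antiperiodic_from_max[OF duffing_solution_uminus[OF hs] \<open>A > 0\<close> this] t0 bound
    obtain T where "T > 0" "\<forall>t. - u (t + T) = u t" "3 + 3/4 * A^2 < (pi / T)^2" "(pi / T)^2 < 3 + 3/2 * A^2"
      by auto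
    then show ?thesis using that[of T] by (simp add: minus_equation_iff)
  qed
  then show ?thesis using that \<open>A > 0\<close> VA bound A_def by blast
qed

lemma duffing_amplitude_threshold:
  assumes "0 \<le> A"
  shows "A \<le> sqrt (10/21) \<longleftrightarrow> A^2 \<le> 10/21"
    and "A \<le> sqrt (10/21) \<longleftrightarrow> duffing_potential A \<le> 235/294"
proof -
  show sq: "A \<le> sqrt (10/21) \<longleftrightarrow> A^2 \<le> 10/21"
    using assms real_le_rsqrt power_mono[of A "sqrt (10/21)" 2] by auto
  have V: "duffing_potential (sqrt (10/21)) = 235/294"
    by (simp add: duffing_potential_def power4_eq_xxxx)
  have "A^2 \<le> 10/21 \<longleftrightarrow> duffing_potential A \<le> duffing_potential (sqrt (10/21))"
    using duffing_potential_le_iff[of A "sqrt (10/21)"] by simp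
  then show "A \<le> sqrt (10/21) \<longleftrightarrow> duffing_potential A \<le> 235/294"
    unfolding sq V .
qed

text \<open>An amplitude with \<open>A\<^sup>2 \<le> 10/21\<close> puts the coefficient \<open>7 + 27/2 y\<^sup>2\<close>, whose period is the
  half period \<open>T\<close> of \<open>y\<close>, into the first stability zone: \<open>(\<pi>/T)\<^sup>2 < 7\<close> and
  \<open>7 + 27/2 A\<^sup>2 < (2\<pi>/T)\<^sup>2\<close>.\<close>
lemma hill_lyapunov_stable_antiperiodic_mode:
  fixes y :: "real \<Rightarrow> real"
  assumes T: "T > 0" and anti: "\<forall>t. y (t + T) = - y t" and bound: "\<forall>t. \<bar>y t\<bar> \<le> A"
    and A: "A^2 \<le> 10/21" and lo: "3 + 3/4 * A^2 < (pi / T)^2" and hi: "(pi / T)^2 < 3 + 3/2 * A^2"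
  shows "hill_lyapunov_stable (\<lambda>t. 7 + 27/2 * (y t)^2)"
proof (rule hill_lyapunov_stable_zhukovskii[OF T])
  show "\<forall>t. 7 + 27/2 * (y (t + T))^2 = 7 + 27/2 * (y t)^2" using anti by simp
  show "sqrt 7 > 0" "sqrt (7 + 27/2 * A^2) > 0" by (simp_all add: add_pos_nonneg)
  show "\<forall>t. (sqrt 7)^2 \<le> 7 + 27/2 * (y t)^2" by simp
  show "\<forall>t. 7 + 27/2 * (y t)^2 \<le> (sqrt (7 + 27/2 * A^2))^2"
    using power_mono[OF bound[rule_format] abs_ge_zero, of _ 2] by simp
  have "(pi / T)^2 < (sqrt 7)^2" using hi A by simp
  then have "pi / T < sqrt 7" using T by (metis power_less_imp_less_base real_sqrt_ge_zero zero_le_numeral)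
  then show "pi / sqrt 7 < T" using T by (simp add: field_simps)
  have "(2 * (pi / T))^2 = 4 * (pi / T)^2" by (simp only: power_mult_distrib) simp
  moreover have "(sqrt (7 + 27/2 * A^2))^2 = 7 + 27/2 * A^2" using zero_le_power2[of A] by simp
  ultimately have "(sqrt (7 + 27/2 * A^2))^2 < (2 * (pi / T))^2" using lo A by linarith
  then have "sqrt (7 + 27/2 * A^2) < 2 * (pi / T)"
    using T by (metis power_less_imp_less_base divide_nonneg_pos less_le mult_nonneg_nonneg
        pi_ge_zero zero_le_numeral)
  then show "T < 2 * pi / sqrt (7 + 27/2 * A^2)"
    using T by (simp add: field_simps add_pos_nonneg)
qed

theorem theorem4p1:
  fixes \<alpha> \<beta> :: real and y y' :: "real \<Rightarrow> real"
  assumes "(\<alpha>, \<beta>) \<noteq> (0, 0)"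
    and "\<forall>t. (y has_real_derivative y' t) (at t)"
    and "\<forall>t. (y' has_real_derivative (- (3 * y t + 3/2 * (y t)^3))) (at t)"
    and "y 0 = \<alpha>" and "y' 0 = \<beta>"
  shows "((SUP t. \<bar>y t\<bar>) \<le> sqrt (10/21) \<longleftrightarrow> \<beta>^2/2 + 3/2 * \<alpha>^2 + 3/8 * \<alpha>^4 \<le> 235/294)
       \<and> ((SUP t. \<bar>y t\<bar>) \<le> sqrt (10/21) \<longrightarrow> hill_lyapunov_stable (\<lambda>t. 7 + 27/2 * (y t)^2))"
proof -
  have hs: "duffing_solution y y'" using assms(2,3) by (simp add: duffing_solution_def)
  have E: "\<beta>^2/2 + 3/2 * \<alpha>^2 + 3/8 * \<alpha>^4 = (y' 0)^2 / 2 + duffing_potential (y 0)"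
    using assms(4,5) by (simp add: duffing_potential_def)
  have "0 < \<beta>^2/2 + 3/2 * \<alpha>^2 + 3/8 * \<alpha>^4"
    using assms(1) by (cases "\<alpha> = 0") (auto intro: add_pos_nonneg add_nonneg_pos)
  then obtain A T where A: "A > 0" "duffing_potential A = \<beta>^2/2 + 3/2 * \<alpha>^2 + 3/8 * \<alpha>^4"
    "\<forall>t. \<bar>y t\<bar> \<le> A" "\<exists>t. \<bar>y t\<bar> = A" and T: "T > 0" "\<forall>t. y (t + T) = - y t"
    "3 + 3/4 * A^2 < (pi / T)^2" "(pi / T)^2 < 3 + 3/2 * A^2"
    unfolding E by (rule duffing_oscillation[OF hs]) blast
  have "(SUP t. \<bar>y t\<bar>) = A" using A(3,4) by (intro cSup_eq_maximum) auto
  then show ?thesis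
    using A(2) duffing_amplitude_threshold[of A] \<open>A > 0\<close>
      hill_lyapunov_stable_antiperiodic_mode[OF T(1,2) A(3) _ T(3,4)] by auto
qed

end
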